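(* Let $N, S \ge 1$, let $\overline{C}_1,\dots,\overline{C}_S \in \mathbb{R}^{N\times N}$ be symmetric matrices, and let $h \in \Sigma_N$. Define $D_h = \mathrm{diag}(h)$ and the matrix $M \in \mathbb{R}^{S\times S}$ by $M_{pq} = \langle D_h \overline{C}_p, \overline{C}_q D_h\rangle_F$. Then $M$ is positive semi-definite, so $\|x\|_M := \sqrt{x^\top M x}$ defines a (pseudo-)norm on $\mathbb{R}^S$ and $d_M(x,y)=\|x-y\|_M$ a Mahalanobis (pseudo-)distance. Moreover, for any $w^{(1)}, w^{(2)} \in \Sigma_S$, $$GW_2\Big(\sum_{s=1}^S w^{(1)}_s \overline{C}_s,\ \sum_{s=1}^S w^{(2)}_s \overline{C}_s,\ h,\ h\Big) \le \|w^{(1)} - w^{(2)}\|_M .$$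
   Context: $\Sigma_N = \{h \in \mathbb{R}_+^N : \sum_i h_i = 1\}$. For $h^X\in\Sigma_{N^X}$, $h^Y\in\Sigma_{N^Y}$, $\mathcal{U}(h^X,h^Y) = \{T \in \mathbb{R}_+^{N^X\times N^Y} : T\mathbf{1}_{N^Y} = h^X,\ T^\top \mathbf{1}_{N^X} = h^Y\}$. For matrices $C^X \in \mathbb{R}^{N^X\times N^X}$, $C^Y\in\mathbb{R}^{N^Y\times N^Y}$, the Gromov–Wasserstein distance is $GW_2(C^X,C^Y,h^X,h^Y) = \big(\min_{T\in\mathcal{U}(h^X,h^Y)} \sum_{i,j,k,l} (C^X_{ij} - C^Y_{kl})^2 T_{ik}T_{jl}\big)^{1/2}$. $\langle A,B\rangle_F = \mathrm{tr}(A^\top B)$. *)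

theory Defs
  imports "HOL-Analysis.Analysis"
begin

definition prob_simplex :: "(real^'n) set" where
  "prob_simplex = {h. (\<forall>i. 0 \<le> h $ i) \<and> (\<Sum>i\<in>UNIV. h $ i) = 1}"

definition couplings :: "real^'n \<Rightarrow> real^'m \<Rightarrow> (real^'m^'n) set" where
  "couplings hX hY = {T. (\<forall>i k. 0 \<le> T $ i $ k)
      \<and> (\<forall>i. (\<Sum>k\<in>UNIV. T $ i $ k) = hX $ i)
      \<and> (\<forall>k. (\<Sum>i\<in>UNIV. T $ i $ k) = hY $ k)}"

definition gw_cost :: "real^'n^'n \<Rightarrow> real^'m^'m \<Rightarrow> real^'m^'n \<Rightarrow> real" where
  "gw_cost CX CY T = (\<Sum>i\<in>UNIV. \<Sum>j\<in>UNIV. \<Sum>k\<in>UNIV. \<Sum>l\<in>UNIV.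
      (CX $ i $ j - CY $ k $ l)\<^sup>2 * T $ i $ k * T $ j $ l)"

text \<open>GW_2 distance (the minimum is attained; we write it as an infimum).\<close>
definition GW2 :: "real^'n^'n \<Rightarrow> real^'m^'m \<Rightarrow> real^'n \<Rightarrow> real^'m \<Rightarrow> real" where
  "GW2 CX CY hX hY = sqrt (Inf (gw_cost CX CY ` couplings hX hY))"

definition frob_inner :: "real^'n^'m \<Rightarrow> real^'n^'m \<Rightarrow> real" where
  "frob_inner A B = trace (transpose A ** B)"

definition diag_mat :: "real^'n \<Rightarrow> real^'n^'n" where
  "diag_mat h = (\<chi> i j. if i = j then h $ i else 0)"

definition symmetric_mat :: "real^'n^'n \<Rightarrow> bool" where
  "symmetric_mat A \<longleftrightarrow> transpose A = A"

definition psd :: "real^'n^'n \<Rightarrow> bool" where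
  "psd A \<longleftrightarrow> symmetric_mat A \<and> (\<forall>x. 0 \<le> x \<bullet> (A *v x))"

definition M_mat :: "real^'n \<Rightarrow> ('s \<Rightarrow> real^'n^'n) \<Rightarrow> real^'s^'s" where
  "M_mat h C = (\<chi> p q. frob_inner (diag_mat h ** C p) (C q ** diag_mat h))"

definition mnorm :: "real^'s^'s \<Rightarrow> real^'s \<Rightarrow> real" where
  "mnorm M x = sqrt (x \<bullet> (M *v x))"

definition mdist :: "real^'s^'s \<Rightarrow> real^'s \<Rightarrow> real^'s \<Rightarrow> real" where
  "mdist M x y = mnorm M (x - y)"

end

theory Submission
  imports Defs
begin

text \<open>
  With \<open>W = weighted_mat h\<close>, i.e. \<open>W(A) = D\<^sub>h\<^sup>1\<^sup>/\<^sup>2 A D\<^sub>h\<^sup>1\<^sup>/\<^sup>2\<close>, the matrix \<open>M\<close> is the Gram matrix of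
  \<open>W(C\<^sub>1), \<dots>, W(C\<^sub>S)\<close> for the Frobenius inner product, so it is positive semi-definite and
  \<open>\<parallel>x\<parallel>\<^sub>M\<close> is the Frobenius norm of \<open>W(\<Sum>\<^sub>s x\<^sub>s C\<^sub>s)\<close>, a seminorm.
  For the distance bound, the diagonal coupling \<open>D\<^sub>h\<close> is admissible in the GW problem
  and its cost is exactly \<open>\<parallel>W(\<Sum>\<^sub>s (w\<^sup>1\<^sub>s - w\<^sup>2\<^sub>s) C\<^sub>s)\<parallel>\<^sup>2 = \<parallel>w\<^sup>1 - w\<^sup>2\<parallel>\<^sub>M\<^sup>2\<close>.
\<close>

definition gram_matrix :: "('s::finite \<Rightarrow> 'a::real_inner) \<Rightarrow> real^'s^'s" where
  "gram_matrix v = (\<chi> p q. v p \<bullet> v q)"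

lemma quadratic_form_gram_matrix:
  "x \<bullet> (gram_matrix v *v x) = (norm (\<Sum>p\<in>UNIV. x $ p *\<^sub>R v p))\<^sup>2"
  unfolding power2_norm_eq_inner
  by (simp add: gram_matrix_def inner_vec_def matrix_vector_mult_def inner_sum_left
      inner_sum_right sum_distrib_left mult.assoc)
    (subst sum.swap, simp add: inner_commute algebra_simps)

lemma psd_gram_matrix: "psd (gram_matrix v)"
  unfolding psd_def symmetric_mat_def quadratic_form_gram_matrix
  by (simp add: vec_eq_iff transpose_def gram_matrix_def inner_commute)

lemma mnorm_gram_matrix: "mnorm (gram_matrix v) x = norm (\<Sum>p\<in>UNIV. x $ p *\<^sub>R v p)"
  by (simp add: mnorm_def quadratic_form_gram_matrix)

definition weighted_mat :: "real^'n \<Rightarrow> real^'n^'n \<Rightarrow> real^'n^'n" where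
  "weighted_mat h A = (\<chi> i j. sqrt (h $ i * h $ j) * A $ i $ j)"

lemma linear_weighted_mat: "linear (weighted_mat h)"
  by (rule linearI) (simp_all add: weighted_mat_def vec_eq_iff algebra_simps)

lemma inner_weighted_mat:
  assumes "\<And>i. 0 \<le> h $ i"
  shows "weighted_mat h A \<bullet> weighted_mat h B
    = (\<Sum>i\<in>UNIV. \<Sum>j\<in>UNIV. h $ i * h $ j * (A $ i $ j * B $ i $ j))"
proof -
  have "weighted_mat h A $ i $ j * weighted_mat h B $ i $ j
      = h $ i * h $ j * (A $ i $ j * B $ i $ j)" for i j
    using assms[of i] assms[of j]
    by (simp add: weighted_mat_def algebra_simps flip: power2_eq_square)
  then show ?thesis
    by (simp add: inner_vec_def)
qed

lemma diag_mat_mult_nth: "(diag_mat h ** A) $ i $ j = h $ i * A $ i $ j"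
  by (simp add: diag_mat_def matrix_matrix_mult_def if_distrib[of "\<lambda>x. x * _"] cong: if_cong)

lemma mult_diag_mat_nth: "(A ** diag_mat h) $ i $ j = A $ i $ j * h $ j"
  by (simp add: diag_mat_def matrix_matrix_mult_def if_distrib[of "\<lambda>x. _ * x"] cong: if_cong)

lemma M_mat_nth:
  "M_mat h C $ p $ q = (\<Sum>i\<in>UNIV. \<Sum>j\<in>UNIV. h $ i * h $ j * (C p $ i $ j * C q $ i $ j))"
proof -
  have "M_mat h C $ p $ q
      = (\<Sum>j\<in>UNIV. \<Sum>i\<in>UNIV. (diag_mat h ** C p) $ i $ j * (C q ** diag_mat h) $ i $ j)"
    by (simp add: M_mat_def frob_inner_def trace_def matrix_matrix_mult_def transpose_def)
  also have "\<dots> = (\<Sum>j\<in>UNIV. \<Sum>i\<in>UNIV. h $ i * h $ j * (C p $ i $ j * C q $ i $ j))"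
    by (simp add: diag_mat_mult_nth mult_diag_mat_nth algebra_simps)
  also have "\<dots> = (\<Sum>i\<in>UNIV. \<Sum>j\<in>UNIV. h $ i * h $ j * (C p $ i $ j * C q $ i $ j))"
    by (rule sum.swap)
  finally show ?thesis .
qed

lemma M_mat_eq_gram_matrix:
  assumes "\<And>i. 0 \<le> h $ i"
  shows "M_mat h C = gram_matrix (\<lambda>p. weighted_mat h (C p))"
  by (simp add: vec_eq_iff gram_matrix_def M_mat_nth inner_weighted_mat assms)

lemma mnorm_M_mat:
  assumes "\<And>i. 0 \<le> h $ i"
  shows "mnorm (M_mat h C) x = norm (weighted_mat h (\<Sum>p\<in>UNIV. x $ p *\<^sub>R C p))"
  using linear_weighted_mat[of h]
  by (simp add: M_mat_eq_gram_matrix[OF assms] mnorm_gram_matrix linear_sum linear_scale)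

lemma diag_mat_in_couplings:
  assumes "\<And>i. 0 \<le> h $ i"
  shows "diag_mat h \<in> couplings h h"
  by (simp add: couplings_def diag_mat_def assms cong: if_cong)

lemma gw_cost_nonneg:
  assumes "T \<in> couplings hX hY"
  shows "0 \<le> gw_cost CX CY T"
  using assms by (auto simp: gw_cost_def couplings_def intro!: sum_nonneg)

lemma GW2_le_sqrt_gw_cost:
  assumes "T \<in> couplings hX hY"
  shows "GW2 CX CY hX hY \<le> sqrt (gw_cost CX CY T)"
proof -
  have "bdd_below (gw_cost CX CY ` couplings hX hY)"
    by (rule bdd_belowI[of _ 0]) (auto intro: gw_cost_nonneg)
  then have "Inf (gw_cost CX CY ` couplings hX hY) \<le> gw_cost CX CY T"
    by (rule cInf_lower[OF imageI[OF assms]])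
  then show ?thesis
    by (simp add: GW2_def)
qed

lemma gw_cost_diag_mat:
  assumes "\<And>i. 0 \<le> h $ i"
  shows "gw_cost CX CY (diag_mat h) = (norm (weighted_mat h (CX - CY)))\<^sup>2"
proof -
  have "gw_cost CX CY (diag_mat h)
      = (\<Sum>i\<in>UNIV. \<Sum>j\<in>UNIV. (CX $ i $ j - CY $ i $ j)\<^sup>2 * h $ i * h $ j)"
    by (simp add: gw_cost_def diag_mat_def if_distrib[of "\<lambda>x. _ * x"] if_distrib[of "\<lambda>x. x * _"]
        cong: if_cong)
  also have "\<dots> = weighted_mat h (CX - CY) \<bullet> weighted_mat h (CX - CY)"
    by (simp add: inner_weighted_mat assms power2_eq_square algebra_simps)
  finally show ?thesis
    by (simp add: power2_norm_eq_inner)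
qed

lemma GW2_combinations_le_mnorm:
  fixes C :: "'s::finite \<Rightarrow> real^'n::finite^'n"
  assumes "\<And>i. 0 \<le> h $ i"
  shows "GW2 (\<Sum>s\<in>UNIV. w1 $ s *\<^sub>R C s) (\<Sum>s\<in>UNIV. w2 $ s *\<^sub>R C s) h h
    \<le> mnorm (M_mat h C) (w1 - w2)"
proof -
  let ?X = "\<Sum>s\<in>UNIV. w1 $ s *\<^sub>R C s" and ?Y = "\<Sum>s\<in>UNIV. w2 $ s *\<^sub>R C s"
  have "GW2 ?X ?Y h h \<le> norm (weighted_mat h (?X - ?Y))"
    using GW2_le_sqrt_gw_cost[OF diag_mat_in_couplings[OF assms]]
    by (simp add: gw_cost_diag_mat assms)
  also have "?X - ?Y = (\<Sum>s\<in>UNIV. (w1 - w2) $ s *\<^sub>R C s)"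
    by (simp add: sum_subtractf scaleR_diff_left)
  finally show ?thesis
    by (simp only: mnorm_M_mat assms)
qed

theorem proposition1:
  fixes C :: "'s::finite \<Rightarrow> real^'n::finite^'n"
    and h :: "real^'n"
  assumes sym: "\<And>s. symmetric_mat (C s)"
    and h: "h \<in> prob_simplex"
  shows "psd (M_mat h C)
    \<and> (\<forall>x y. mnorm (M_mat h C) (x + y) \<le> mnorm (M_mat h C) x + mnorm (M_mat h C) y)
    \<and> (\<forall>c x. mnorm (M_mat h C) (c *\<^sub>R x) = \<bar>c\<bar> * mnorm (M_mat h C) x)
    \<and> (\<forall>x y z. mdist (M_mat h C) x z \<le> mdist (M_mat h C) x y + mdist (M_mat h C) y z)
    \<and> (\<forall>x y. mdist (M_mat h C) x y = mdist (M_mat h C) y x)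
    \<and> (\<forall>w1 \<in> prob_simplex. \<forall>w2 \<in> prob_simplex.
         GW2 (\<Sum>s\<in>UNIV. w1 $ s *\<^sub>R C s) (\<Sum>s\<in>UNIV. w2 $ s *\<^sub>R C s) h h
           \<le> mnorm (M_mat h C) (w1 - w2))"
proof (intro conjI allI ballI)
  have h_nonneg: "\<And>i. 0 \<le> h $ i"
    using h by (simp add: prob_simplex_def)
  define L where "L x = weighted_mat h (\<Sum>p\<in>UNIV. x $ p *\<^sub>R C p)" for x :: "real^'s"
  have L: "linear L"
    unfolding L_def
    by (intro linear_compose[OF _ linear_weighted_mat, unfolded o_def] linearI)
      (simp_all add: sum.distrib scaleR_add_left scaleR_sum_right)
  have mnorm_L: "mnorm (M_mat h C) x = norm (L x)" for x
    by (simp add: L_def mnorm_M_mat h_nonneg)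
  have mdist_L: "mdist (M_mat h C) x y = dist (L x) (L y)" for x y
    by (simp add: mdist_def mnorm_L dist_norm linear_diff[OF L])
  show "psd (M_mat h C)"
    by (simp add: M_mat_eq_gram_matrix[OF h_nonneg] psd_gram_matrix)
  show "mnorm (M_mat h C) (x + y) \<le> mnorm (M_mat h C) x + mnorm (M_mat h C) y" for x y
    by (simp add: mnorm_L linear_add[OF L] norm_triangle_ineq)
  show "mnorm (M_mat h C) (c *\<^sub>R x) = \<bar>c\<bar> * mnorm (M_mat h C) x" for c x
    by (simp add: mnorm_L linear_scale[OF L])
  show "mdist (M_mat h C) x z \<le> mdist (M_mat h C) x y + mdist (M_mat h C) y z" for x y z
    by (simp add: mdist_L dist_triangle)
  show "mdist (M_mat h C) x y = mdist (M_mat h C) y x" for x y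
    by (simp add: mdist_L dist_commute)
  show "GW2 (\<Sum>s\<in>UNIV. w1 $ s *\<^sub>R C s) (\<Sum>s\<in>UNIV. w2 $ s *\<^sub>R C s) h h
      \<le> mnorm (M_mat h C) (w1 - w2)" for w1 w2
    by (rule GW2_combinations_le_mnorm[OF h_nonneg])
qed

end
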